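(* Let $0<k\le1$. (i) The system $$R(\bar{x};\underline{x},\bar{x})=\tfrac1k,\qquad J'(\bar{x}-;\underline{x},\bar{x})=1$$ has a unique solution $(\underline{x},\bar{x})$ with $\bar{x}>\underline{x}\ge0$, and it satisfies $0\le\underline{x}<x^*<\bar{x}$. Moreover, if $k=1$ then $\underline{x}=0$, and if $k<1$ then $\underline{x}>0$. (ii) For this unique solution, $\bar{x}$ satisfies the equation $J'\big(\bar{x}-;\bar{x}-k\tfrac{g(\bar{x})}{g'(\bar{x})},\bar{x}\big)=1$ and $\underline{x}=\bar{x}-k\frac{g(\bar{x})}{g'(\bar{x})}$. (iii) The equation in (ii) is equivalent to $g\big(\bar{x}-k\tfrac{g(\bar{x})}{g'(\bar{x})}\big)=(1-k)g(\bar{x})$.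
   Context: Fix $r>0$ and $\mu,\sigma:\mathbb{R}\to\mathbb{R}$ satisfying: (A.1) $\mu,\sigma$ are continuously differentiable and Lipschitz continuous, and $\mu',\sigma'$ are Lipschitz continuous; (A.2) $\sigma^2(x)>0$ for $x\ge0$; (A.3) $\mu'(x)<r$ for $x\ge0$; (A.4) there are $\varepsilon>0$, $x_a\ge0$ with $\mu'(x)<r-\varepsilon$ for $x\ge x_a$; (A.5) $\mu(0)>0$. Let $g$ be a canonical solution: $g\in C^2(0,\infty)$, $\mu g'+\frac12\sigma^2g''=rg$ on $(0,\infty)$, $g(0)=0$, $g'(0)>0$; then $g'>0$ on $[0,\infty)$, and $x^*\in(0,\infty)$ denotes the unique point with $g''(x^* )=0$, $g''<0$ on $(0,x^* )$, $g''>0$ on $(x^*,\infty)$. For the surplus $dX_t=\mu(X_t)dt+\sigma(X_t)dW_t-dD_t$, $X_0=x$, with bankruptcy time $\tau=\inf\{t\ge0:X_t\le0\}$, and $\bar{x}>\underline{x}\ge0$, the constant lump sum dividend barrier policy $(\underline{x},\bar{x})$ pays $\bar{x}-\underline{x}$ at the times $\tau_1=\inf\{t>0:X_t\ge\bar{x}\}$, $\tau_n=\inf\{t>\tau_{n-1}:X_t\ge\bar{x}\}$, plus $x-\underline{x}$ at time $0$ if $x\ge\bar{x}$. $J(x;\underline{x},\bar{x})=\mathbb{E}_x\big(\sum_{n:\tau_n\le\tau}e^{-r\tau_n}\zeta_n\big)$ and $R(x;\underline{x},\bar{x})=\mathbb{E}_x\big(\sum_{n:\tau_n\le\tau}e^{-r\tau_n}\big)$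 for this policy ($\zeta_n$ the dividends); explicitly $J(x;\underline{x},\bar{x})=g(x)\frac{\bar{x}-\underline{x}}{g(\bar{x})-g(\underline{x})}$, $R(x;\underline{x},\bar{x})=\frac{g(x)}{g(\bar{x})-g(\underline{x})}$ for $0\le x\le\bar{x}$. $J'$ denotes the derivative in $x$ and $J'(\bar{x}-;\cdot)$ the left derivative at $\bar{x}$. *)

theory Defs
  imports "HOL-Analysis.Analysis"
begin

text \<open>Value of the constant lump sum dividend barrier policy (lo, hi), explicit
 formula valid for 0 <= x <= hi:  J(x;lo,hi) = g(x) (hi - lo) / (g(hi) - g(lo)).\<close>
definition Jfun :: "(real \<Rightarrow> real) \<Rightarrow> real \<Rightarrow> real \<Rightarrow> real \<Rightarrow> real" where
  "Jfun g lo hi x = g x * (hi - lo) / (g hi - g lo)"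

text \<open>Expected discounted number of dividend payments, formula valid for 0 <= x <= hi:
 R(x;lo,hi) = g(x) / (g(hi) - g(lo)).\<close>
definition Rfun :: "(real \<Rightarrow> real) \<Rightarrow> real \<Rightarrow> real \<Rightarrow> real \<Rightarrow> real" where
  "Rfun g lo hi x = g x / (g hi - g lo)"

definition Jleft_deriv_eq :: "(real \<Rightarrow> real) \<Rightarrow> real \<Rightarrow> real \<Rightarrow> real \<Rightarrow> bool" where
  "Jleft_deriv_eq g lo hi D \<longleftrightarrow> ((\<lambda>x. Jfun g lo hi x) has_real_derivative D) (at_left hi)"

end

theory Submission
  imports Defs
begin

text \<open>
  The two equations say that g(lo) = (1 - k) g(hi) and that the secant of g over [lo, hi] has
  slope g'(hi), i.e. lo = hi - k g(hi) / g'(hi). Since g is concave on [0, x*] and convex on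
  [x*, \<infinity>), such a secant straddles x*, and a larger hi forces a smaller lo. Along
  solutions g(lo) would therefore decrease while (1 - k) g(hi) increases, which gives
  uniqueness. Existence is the intermediate value theorem for
  g(hi - k g(hi) / g'(hi)) - (1 - k) g(hi) on the convex part, which needs g' to be unbounded.

  Positivity and unboundedness of g' both come from the ODE. At a zero z \<le> x* of g' it
  gives g''(z) > 0. If g' were bounded with supremum L, then g would grow like L x while (A.4)
  bounds mu g' by about (r - \<epsilon>) L x; as sigma grows at most linearly, g''(x) \<ge> c / x
  for large x, so g' would grow like log x.
\<close>

lemma eventually_le_linear_of_deriv_le:
  fixes f f' :: "real \<Rightarrow> real"
  assumes f': "\<And>x. (f has_real_derivative f' x) (at x)"
    and le: "\<And>x. a \<le> x \<Longrightarrow> f' x \<le> c"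
  shows "\<forall>\<^sub>F y in at_top. f y \<le> c * y + (f a - c * a)"
  using eventually_ge_at_top[of a]
proof eventually_elim
  case (elim y)
  have "(\<lambda>x. f x - c * x) y \<le> (\<lambda>x. f x - c * x) a"
  proof (rule DERIV_nonpos_imp_nonincreasing[OF elim])
    fix x assume "a \<le> x"
    have "((\<lambda>x. f x - c * x) has_real_derivative f' x - c) (at x)"
      using f'[of x] by (auto intro!: derivative_eq_intros)
    then show "\<exists>d. ((\<lambda>x. f x - c * x) has_real_derivative d) (at x) \<and> d \<le> 0"
      using le[OF \<open>a \<le> x\<close>] by (intro exI[of _ "f' x - c"]) simp
  qed
  then show ?case by simp
qed

lemma lipschitz_on_UNIV_eventually_abs_le:
  fixes f :: "real \<Rightarrow> real"
  assumes "C-lipschitz_on UNIV f"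
  shows "\<forall>\<^sub>F y in at_top. \<bar>f y\<bar> \<le> (\<bar>f 0\<bar> + C) * y"
  using eventually_ge_at_top[of 1]
proof eventually_elim
  case (elim y)
  have "\<bar>f y - f 0\<bar> \<le> C * y"
    using lipschitz_onD[OF assms, of y 0] elim by (simp add: dist_real_def)
  moreover have "\<bar>f 0\<bar> \<le> \<bar>f 0\<bar> * y"
    using elim by (simp add: mult_le_cancel_left1)
  moreover have "(\<bar>f 0\<bar> + C) * y = \<bar>f 0\<bar> * y + C * y"
    by (rule distrib_right)
  ultimately show ?case
    using abs_triangle_ineq[of "f y - f 0" "f 0"] by linarith
qed

lemma unbounded_of_deriv_ge_inverse:
  fixes f f' :: "real \<Rightarrow> real"
  assumes a: "0 < a" and c: "0 < c"
    and f': "\<And>t. a \<le> t \<Longrightarrow> (f has_real_derivative f' t) (at t)"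
    and ge: "\<And>t. a \<le> t \<Longrightarrow> c / t \<le> f' t"
  shows "\<exists>t\<ge>a. B \<le> f t"
proof -
  define t where "t = a * exp (\<bar>B - f a\<bar> / c)"
  have "a \<le> t"
    unfolding t_def using a c by simp
  have "(\<lambda>x. f x - c * ln x) a \<le> (\<lambda>x. f x - c * ln x) t"
  proof (rule DERIV_nonneg_imp_nondecreasing[OF \<open>a \<le> t\<close>])
    fix x assume "a \<le> x"
    then have "((\<lambda>x. f x - c * ln x) has_real_derivative f' x - c * (1 / x)) (at x)"
      using f' a by (auto intro!: derivative_eq_intros)
    moreover have "0 \<le> f' x - c * (1 / x)"
      using ge[OF \<open>a \<le> x\<close>] by simp
    ultimately show "\<exists>d. ((\<lambda>x. f x - c * ln x) has_real_derivative d) (at x) \<and> 0 \<le> d"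
      by blast
  qed
  moreover have "ln t = ln a + \<bar>B - f a\<bar> / c"
    unfolding t_def using a by (simp add: ln_mult)
  ultimately have "f a + \<bar>B - f a\<bar> \<le> f t"
    using c by (simp add: algebra_simps)
  then show ?thesis
    using \<open>a \<le> t\<close> by (intro exI[of _ t]) auto
qed

lemma eventually_inverse_le_of_linear_le:
  fixes s h :: "real \<Rightarrow> real"
  assumes "0 < D"
    and lower: "\<forall>\<^sub>F y in at_top. D * y \<le> (s y)\<^sup>2 * h y"
    and s_le: "\<forall>\<^sub>F y in at_top. \<bar>s y\<bar> \<le> M * y"
  shows "\<forall>\<^sub>F y in at_top. D / (\<bar>M\<bar> + 1)\<^sup>2 / y \<le> h y"
  using lower s_le eventually_gt_at_top[of 0]
proof eventually_elim
  case (elim y)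
  define N where "N = (\<bar>M\<bar> + 1)\<^sup>2"
  have "0 < N"
    unfolding N_def by (simp add: add_pos_nonneg)
  have "\<bar>s y\<bar> \<le> (\<bar>M\<bar> + 1) * y"
    using elim(2,3) by (smt (verit) mult_right_mono)
  from power_mono[OF this abs_ge_zero, of 2] have s_sq: "(s y)\<^sup>2 \<le> N * y\<^sup>2"
    by (simp add: N_def power_mult_distrib)
  have "0 < (s y)\<^sup>2 * h y"
    using elim(1,3) \<open>0 < D\<close> by (smt (verit) mult_pos_pos)
  then have "0 < h y"
    by (simp add: zero_less_mult_iff)
  then have "D * y \<le> (N * y * h y) * y"
    using elim(1) s_sq by (smt (verit) mult_right_mono power2_eq_square mult.commute mult.assoc)
  then have "D \<le> N * y * h y"
    using mult_le_cancel_right_pos[OF elim(3)] by blast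
  then show ?case
    using elim(3) \<open>0 < N\<close> unfolding N_def[symmetric]
    by (simp add: pos_divide_le_eq ac_simps)
qed

lemma Jleft_deriv_eq_iff:
  assumes "(g has_real_derivative d) (at hi)"
  shows "Jleft_deriv_eq g lo hi D \<longleftrightarrow> D = d * (hi - lo) / (g hi - g lo)"
proof -
  have "((\<lambda>x. Jfun g lo hi x) has_real_derivative d * (hi - lo) / (g hi - g lo)) (at hi)"
    unfolding Jfun_def using assms by (intro DERIV_cdivide DERIV_cmult_right)
  then have J': "((\<lambda>x. Jfun g lo hi x) has_real_derivative d * (hi - lo) / (g hi - g lo)) (at_left hi)"
    by (rule has_field_derivative_at_within)
  show ?thesis
  proof
    assume "Jleft_deriv_eq g lo hi D"
    then show "D = d * (hi - lo) / (g hi - g lo)"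
      unfolding Jleft_deriv_eq_def
      using J' has_field_derivative_unique trivial_limit_at_left_real by blast
  qed (use J' in \<open>simp add: Jleft_deriv_eq_def\<close>)
qed

definition barrier_solution :: "(real \<Rightarrow> real) \<Rightarrow> real \<Rightarrow> real \<Rightarrow> real \<Rightarrow> bool" where
  "barrier_solution g k lo hi \<longleftrightarrow>
     0 \<le> lo \<and> lo < hi \<and> Rfun g lo hi hi = 1 / k \<and> Jleft_deriv_eq g lo hi 1"

locale concave_convex =
  fixes g g1 g2 :: "real \<Rightarrow> real" and xs :: real
  assumes g_cont0: "continuous (at 0 within {0..}) g"
    and g_deriv: "\<And>x. 0 < x \<Longrightarrow> (g has_real_derivative g1 x) (at x)"
    and g1_deriv: "\<And>x. 0 < x \<Longrightarrow> (g1 has_real_derivative g2 x) (at x)"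
    and g_0: "g 0 = 0"
    and xs_pos: "0 < xs"
    and g2_xs: "g2 xs = 0"
    and g2_neg: "\<And>x. 0 < x \<Longrightarrow> x < xs \<Longrightarrow> g2 x < 0"
    and g2_pos: "\<And>x. xs < x \<Longrightarrow> 0 < g2 x"
begin

lemma g_cont: "continuous_on {0..} g"
proof -
  have "continuous (at x within {0..}) g" if "0 \<le> x" for x
  proof (cases "x = 0")
    case False
    then show ?thesis
      using that g_deriv[of x] by (simp add: DERIV_isCont continuous_at_imp_continuous_within)
  qed (simp add: g_cont0)
  then show ?thesis
    by (simp add: continuous_on_eq_continuous_within)
qed

lemma g1_cont:
  assumes "0 < a"
  shows "continuous_on {a..b} g1"
proof (intro continuous_at_imp_continuous_on ballI)
  fix x assume "x \<in> {a..b}"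
  then have "0 < x"
    using assms by simp
  then show "isCont g1 x"
    using g1_deriv DERIV_isCont by blast
qed

lemma g_mvt:
  assumes "0 \<le> a" "a < b"
  obtains c where "a < c" "c < b" "g b - g a = g1 c * (b - a)"
proof -
  have "continuous_on {a..b} g"
    using g_cont by (rule continuous_on_subset) (use assms(1) in auto)
  moreover have "g differentiable at x" if "a < x" for x
  proof -
    have "0 < x"
      using assms(1) that by simp
    then show ?thesis
      unfolding real_differentiable_def using g_deriv by blast
  qed
  ultimately obtain l c
    where "a < c" "c < b" "(g has_real_derivative l) (at c)" "g b - g a = (b - a) * l"
    using MVT[OF assms(2)] by blast
  moreover have "l = g1 c"
    using DERIV_unique[OF calculation(3) g_deriv[of c]] assms(1) calculation(1) by simp
  ultimately show thesis
    using that[of c] by (simp add: mult.commute)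
qed

lemma g1_strict_decreasing:
  assumes "0 < a" "a < b" "b \<le> xs"
  shows "g1 b < g1 a"
proof (rule DERIV_neg_imp_decreasing_open[OF assms(2) _ g1_cont[OF assms(1)]])
  fix x assume "a < x" "x < b"
  then have "0 < x" "x < xs"
    using assms by simp_all
  then show "\<exists>y. (g1 has_real_derivative y) (at x) \<and> y < 0"
    using g1_deriv g2_neg by blast
qed

lemma g1_strict_increasing:
  assumes "xs \<le> a" "a < b"
  shows "g1 a < g1 b"
proof (rule DERIV_pos_imp_increasing_open[OF assms(2) _ g1_cont])
  fix x assume "a < x" "x < b"
  then have "0 < x" "xs < x"
    using assms xs_pos by simp_all
  then show "\<exists>y. (g1 has_real_derivative y) (at x) \<and> 0 < y"
    using g1_deriv g2_pos by blast
qed (use assms xs_pos in simp)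

lemma secant_gt_deriv_concave:
  assumes "0 \<le> a" "a < b" "b \<le> xs"
  shows "g1 b * (b - a) < g b - g a"
proof -
  obtain c where "a < c" "c < b" "g b - g a = g1 c * (b - a)"
    using g_mvt assms by blast
  moreover have "g1 b < g1 c"
    using g1_strict_decreasing assms calculation(1,2) by simp
  ultimately show ?thesis
    using assms(2) by simp
qed

lemma secant_lt_deriv_convex:
  assumes "xs \<le> a" "a < b"
  shows "g b - g a < g1 b * (b - a)"
proof -
  have "0 \<le> a"
    using assms(1) xs_pos by simp
  then obtain c where "a < c" "c < b" "g b - g a = g1 c * (b - a)"
    using g_mvt assms(2) by blast
  moreover have "g1 c < g1 b"
    using g1_strict_increasing assms calculation(1,2) by simp
  ultimately show ?thesis
    using assms(2) by simp
qed

lemma secant_slopes_decreasing_concave: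
  assumes "0 \<le> a" "a < b" "b < c" "c \<le> xs"
  shows "(g c - g b) * (b - a) < (g b - g a) * (c - b)"
proof -
  obtain d1 where d1: "a < d1" "d1 < b" "g b - g a = g1 d1 * (b - a)"
    using g_mvt assms by blast
  have "0 \<le> b"
    using assms(1,2) by simp
  then obtain d2 where d2: "b < d2" "d2 < c" "g c - g b = g1 d2 * (c - b)"
    using g_mvt assms(3) by blast
  have "g1 d2 < g1 d1"
    using g1_strict_decreasing assms d1 d2 by simp
  then have "g1 d2 * ((c - b) * (b - a)) < g1 d1 * ((c - b) * (b - a))"
    using assms by simp
  then show ?thesis
    unfolding d1(3) d2(3) by (simp add: ac_simps)
qed

lemma g1_pos_of_ode:
  fixes r :: real and mu sig :: "real \<Rightarrow> real"
  assumes r: "0 < r"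
    and ode: "\<And>x. 0 < x \<Longrightarrow> mu x * g1 x + (sig x)\<^sup>2 / 2 * g2 x = r * g x"
    and sig: "\<And>x. 0 < x \<Longrightarrow> sig x \<noteq> 0"
    and g_deriv0: "(g has_real_derivative g1 0) (at 0 within {0..})"
    and g1_0: "0 < g1 0"
    and x: "0 < x"
  shows "0 < g1 x"
proof -
  have "0 < g1 xs"
  proof (rule ccontr)
    assume "\<not> 0 < g1 xs"
    obtain d where "0 < d" and d: "\<And>h. 0 < h \<Longrightarrow> h < d \<Longrightarrow> g 0 < g h"
      using has_real_derivative_pos_inc_right[OF g_deriv0 g1_0] by auto
    define h where "h = min (d / 2) (xs / 2)"
    have h: "0 < h" "h < xs" "0 < g h"
      using d[of h] \<open>0 < d\<close> xs_pos g_0 unfolding h_def by auto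
    then obtain c where c: "0 < c" "c < h" "g h - g 0 = g1 c * (h - 0)"
      using g_mvt[of 0 h] by auto
    then have "0 < g1 c"
      using h g_0 by (simp add: zero_less_mult_iff)
    then obtain z where z: "c \<le> z" "z \<le> xs" "g1 z = 0"
      using IVT2'[of g1 xs 0 c] g1_cont[of c xs] \<open>\<not> 0 < g1 xs\<close> c h by auto
    then have "0 < g z"
      using secant_gt_deriv_concave[of 0 z] c g_0 by simp
    then have "0 < (sig z)\<^sup>2 / 2 * g2 z"
      using ode[of z] z c r by simp
    then have "0 < g2 z"
      by (simp add: zero_less_mult_iff)
    moreover have "g2 z \<le> 0"
      using g2_neg[of z] g2_xs z c by (cases "z = xs") auto
    ultimately show False
      by simp
  qed
  moreover have "g1 xs \<le> g1 x"
    using g1_strict_decreasing[of x xs] g1_strict_increasing[of xs x] x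
    by (cases x xs rule: linorder_cases) auto
  ultimately show ?thesis
    by simp
qed

end

locale increasing_concave_convex = concave_convex +
  assumes g1_pos: "\<And>x. 0 < x \<Longrightarrow> 0 < g1 x"
begin

lemma g_strict_mono:
  assumes "0 \<le> a" "a < b"
  shows "g a < g b"
proof -
  obtain c where "a < c" "c < b" "g b - g a = g1 c * (b - a)"
    using g_mvt assms by blast
  moreover have "0 < g1 c * (b - a)"
    using g1_pos assms calculation(1) by simp
  ultimately show ?thesis
    by simp
qed

lemma g_pos: "0 < x \<Longrightarrow> 0 < g x"
  using g_strict_mono[of 0 x] g_0 by simp

lemma g_eventually_ge_linear:
  assumes bdd: "bdd_above (g1 ` {xs..})" and "0 < \<eta>"
  obtains K where "\<forall>\<^sub>F y in at_top. (Sup (g1 ` {xs..}) - \<eta>) * y + K \<le> g y"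
proof -
  define L where "L = Sup (g1 ` {xs..})"
  obtain Y where Y: "xs \<le> Y" "L - \<eta> < g1 Y"
    using less_cSupE[of "L - \<eta>" "g1 ` {xs..}"] \<open>0 < \<eta>\<close> unfolding L_def by auto
  have lin: "(L - \<eta>) * y + (g Y - (L - \<eta>) * Y) \<le> g y" if y: "Y < y" for y
  proof -
    have "0 \<le> Y"
      using Y(1) xs_pos by simp
    then obtain c where c: "Y < c" "c < y" "g y - g Y = g1 c * (y - Y)"
      using g_mvt[OF _ y] by blast
    have "L - \<eta> \<le> g1 c"
      using g1_strict_increasing[of Y c] Y c by simp
    then have "(L - \<eta>) * (y - Y) \<le> g1 c * (y - Y)"
      using y by (intro mult_right_mono) auto
    moreover have "(L - \<eta>) * (y - Y) = (L - \<eta>) * y - (L - \<eta>) * Y"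
      by (rule right_diff_distrib)
    ultimately show ?thesis
      using c by linarith
  qed
  have "\<forall>\<^sub>F y in at_top. (L - \<eta>) * y + (g Y - (L - \<eta>) * Y) \<le> g y"
    by (rule eventually_mono[OF eventually_gt_at_top[of Y] lin])
  then show thesis
    using that unfolding L_def by blast
qed

lemma diffusion_term_eventually_ge_linear:
  fixes r \<rho> m0 :: real and mu sig :: "real \<Rightarrow> real"
  assumes r: "0 < r" and \<rho>: "0 < \<rho>" "\<rho> < r"
    and ode: "\<And>x. 0 < x \<Longrightarrow> mu x * g1 x + (sig x)\<^sup>2 / 2 * g2 x = r * g x"
    and mu_le: "\<forall>\<^sub>F y in at_top. mu y \<le> \<rho> * y + m0"
    and bdd: "bdd_above (g1 ` {xs..})"
  obtains D where "0 < D" "\<forall>\<^sub>F y in at_top. D * y \<le> (sig y)\<^sup>2 * g2 y"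
proof -
  define L where "L = Sup (g1 ` {xs..})"
  have le_L: "g1 y \<le> L" if "xs \<le> y" for y
    unfolding L_def using bdd that by (auto intro: cSup_upper)
  have "0 < L"
    using le_L[of xs] g1_pos[OF xs_pos] by simp
  define D where "D = (r - \<rho>) * L / 2"
  have "0 < D"
    using \<open>0 < L\<close> \<rho> unfolding D_def by simp
  obtain K where K: "\<forall>\<^sub>F y in at_top. (L - D / r) * y + K \<le> g y"
    using g_eventually_ge_linear[OF bdd, of "D / r"] \<open>0 < D\<close> r unfolding L_def by auto
  have "\<forall>\<^sub>F y in at_top. D * y \<le> (sig y)\<^sup>2 * g2 y"
    using K mu_le eventually_ge_at_top[of xs] eventually_ge_at_top[of "- m0 / \<rho>"]
      eventually_ge_at_top[of "2 * \<bar>r * K - m0 * L\<bar> / D"]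
  proof eventually_elim
    case (elim y)
    have "0 < y"
      using elim(3) xs_pos by simp
    have "0 \<le> \<rho> * y + m0"
      using elim(4) \<rho> by (simp add: field_simps)
    then have "mu y * g1 y \<le> (\<rho> * y + m0) * L"
      using elim(2,3) le_L[of y] g1_pos[OF \<open>0 < y\<close>]
      by (smt (verit) mult_left_mono mult_mono mult_nonpos_nonneg)
    moreover have "r * ((L - D / r) * y + K) \<le> r * g y"
      using elim(1) r by simp
    moreover have "\<bar>r * K - m0 * L\<bar> \<le> D * y / 2"
      using elim(5) \<open>0 < D\<close> by (simp add: field_simps)
    moreover have "r * ((L - D / r) * y + K) - (\<rho> * y + m0) * L = D * y + (r * K - m0 * L)"
      using r unfolding D_def by (simp add: field_simps)
    moreover have "(sig y)\<^sup>2 / 2 * g2 y = (sig y)\<^sup>2 * g2 y / 2"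
      by simp
    ultimately show ?case
      using ode[OF \<open>0 < y\<close>] by linarith
  qed
  then show thesis
    using that \<open>0 < D\<close> by blast
qed

lemma g1_unbounded_of_ode:
  fixes r \<rho> m0 M :: real and mu sig :: "real \<Rightarrow> real"
  assumes r: "0 < r" and \<rho>: "0 < \<rho>" "\<rho> < r"
    and ode: "\<And>x. 0 < x \<Longrightarrow> mu x * g1 x + (sig x)\<^sup>2 / 2 * g2 x = r * g x"
    and mu_le: "\<forall>\<^sub>F y in at_top. mu y \<le> \<rho> * y + m0"
    and sig_le: "\<forall>\<^sub>F y in at_top. \<bar>sig y\<bar> \<le> M * y"
  shows "\<exists>y\<ge>xs. B \<le> g1 y"
proof (rule ccontr)
  assume "\<not> ?thesis"
  then have le_B: "g1 y \<le> B" if "xs \<le> y" for y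
    using that by (meson less_imp_le not_le)
  then have "bdd_above (g1 ` {xs..})"
    by (intro bdd_aboveI2[where M = B]) simp
  then obtain D where "0 < D" and lower: "\<forall>\<^sub>F y in at_top. D * y \<le> (sig y)\<^sup>2 * g2 y"
    using diffusion_term_eventually_ge_linear[OF r \<rho> ode mu_le] by blast
  from eventually_inverse_le_of_linear_le[OF \<open>0 < D\<close> lower sig_le]
  obtain a where a: "\<And>y. a \<le> y \<Longrightarrow> D / (\<bar>M\<bar> + 1)\<^sup>2 / y \<le> g2 y"
    by (auto simp: eventually_at_top_linorder)
  have "0 < max a xs" "0 < D / (\<bar>M\<bar> + 1)\<^sup>2"
    using xs_pos \<open>0 < D\<close> by (simp_all add: add_pos_nonneg)
  moreover have "(g1 has_real_derivative g2 t) (at t)" "D / (\<bar>M\<bar> + 1)\<^sup>2 / t \<le> g2 t"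
    if "max a xs \<le> t" for t
    using that g1_deriv[of t] a[of t] xs_pos by simp_all
  ultimately obtain t where "max a xs \<le> t" "B + 1 \<le> g1 t"
    using unbounded_of_deriv_ge_inverse by blast
  then show False
    using le_B[of t] by simp
qed

lemma barrier_solution_iff:
  assumes "0 < k"
  shows "barrier_solution g k lo hi \<longleftrightarrow>
           0 \<le> lo \<and> lo < hi \<and> g lo = (1 - k) * g hi \<and> g hi - g lo = g1 hi * (hi - lo)"
proof (cases "0 \<le> lo \<and> lo < hi")
  case True
  then have "0 < g hi - g lo"
    using g_strict_mono by simp
  moreover have "Jleft_deriv_eq g lo hi 1 \<longleftrightarrow> 1 = g1 hi * (hi - lo) / (g hi - g lo)"
    using Jleft_deriv_eq_iff[OF g_deriv] True by simp
  ultimately show ?thesis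
    unfolding barrier_solution_def Rfun_def using True assms by (auto simp: field_simps)
qed (auto simp: barrier_solution_def)

lemma secant_eq_deriv_straddles:
  assumes "0 \<le> lo" "lo < hi" "g hi - g lo = g1 hi * (hi - lo)"
  shows "lo < xs" "xs < hi"
  using assms secant_gt_deriv_concave[of lo hi] secant_lt_deriv_convex[of lo hi] by force+

lemma secant_eq_deriv_antitone:
  assumes s1: "0 \<le> lo1" "lo1 < hi1" "g hi1 - g lo1 = g1 hi1 * (hi1 - lo1)"
    and s2: "0 \<le> lo2" "lo2 < hi2" "g hi2 - g lo2 = g1 hi2 * (hi2 - lo2)"
    and "hi1 < hi2"
  shows "lo2 < lo1"
proof (rule ccontr)
  assume "\<not> lo2 < lo1"
  \<comment> \<open>g minus its tangent at hi2 vanishes at lo2 but is positive at lo1 and at xs,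
    which contradicts concavity on [0, xs] once lo1 < lo2\<close>
  define u where "u x = g x - g hi2 - g1 hi2 * (x - hi2)" for x
  have "xs < hi1" "lo2 < xs"
    using secant_eq_deriv_straddles s1 s2 by auto
  have u_hi1: "0 < u hi1"
    using secant_lt_deriv_convex[of hi1 hi2] \<open>xs < hi1\<close> \<open>hi1 < hi2\<close>
    unfolding u_def by (simp add: algebra_simps)
  have "g1 hi1 * (hi1 - lo1) < g1 hi2 * (hi1 - lo1)"
    using g1_strict_increasing \<open>xs < hi1\<close> \<open>hi1 < hi2\<close> s1 by simp
  then have u_lo1: "0 < u lo1"
    using u_hi1 s1(3) unfolding u_def by (simp add: algebra_simps)
  have u_lo2: "u lo2 = 0"
    using s2(3) unfolding u_def by (simp add: algebra_simps)
  have u_xs: "0 < u xs"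
    using secant_lt_deriv_convex[of xs hi2] \<open>xs < hi1\<close> \<open>hi1 < hi2\<close>
    unfolding u_def by (simp add: algebra_simps)
  have "lo1 < lo2"
    using \<open>\<not> lo2 < lo1\<close> u_lo1 u_lo2 by (cases "lo1 = lo2") auto
  have "(u xs - u lo2) * (lo2 - lo1) - (u lo2 - u lo1) * (xs - lo2)
      = (g xs - g lo2) * (lo2 - lo1) - (g lo2 - g lo1) * (xs - lo2)"
    unfolding u_def by (simp add: algebra_simps)
  also have "\<dots> < 0"
    using secant_slopes_decreasing_concave[of lo1 lo2 xs] s1 \<open>lo1 < lo2\<close> \<open>lo2 < xs\<close> by simp
  finally have "u xs * (lo2 - lo1) + u lo1 * (xs - lo2) < 0"
    using u_lo2 by simp
  moreover have "0 < u xs * (lo2 - lo1)" "0 < u lo1 * (xs - lo2)"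
    using u_xs u_lo1 \<open>lo1 < lo2\<close> \<open>lo2 < xs\<close> by simp_all
  ultimately show False
    by simp
qed

lemma barrier_solution_unique:
  assumes k: "0 < k" "k \<le> 1"
    and sol1: "barrier_solution g k lo1 hi1" and sol2: "barrier_solution g k lo2 hi2"
  shows "lo1 = lo2 \<and> hi1 = hi2"
proof -
  have not_less: "\<not> hi < hi'"
    if "barrier_solution g k lo hi" "barrier_solution g k lo' hi'" for lo hi lo' hi'
  proof
    assume "hi < hi'"
    then have "g lo' < g lo"
      using that secant_eq_deriv_antitone[of lo hi lo' hi'] g_strict_mono[of lo' lo]
      by (auto simp: barrier_solution_iff k)
    moreover have "(1 - k) * g hi \<le> (1 - k) * g hi'"
      using that g_strict_mono[of hi hi'] \<open>hi < hi'\<close> k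
      by (intro mult_left_mono) (auto simp: barrier_solution_iff)
    ultimately show False
      using that by (simp add: barrier_solution_iff k)
  qed
  then have "hi1 = hi2"
    using sol1 sol2 by (meson linorder_neqE)
  then have "g lo1 = g lo2"
    using sol1 sol2 by (simp add: barrier_solution_iff k)
  then have "lo1 = lo2"
    using sol1 sol2 g_strict_mono[of lo1 lo2] g_strict_mono[of lo2 lo1]
    by (cases lo1 lo2 rule: linorder_cases) (auto simp: barrier_solution_def)
  with \<open>hi1 = hi2\<close> show ?thesis
    by simp
qed

definition lower_barrier :: "real \<Rightarrow> real \<Rightarrow> real" where
  "lower_barrier k y = y - k * g y / g1 y"

lemma deriv_mult_sub_lower_barrier: "0 < y \<Longrightarrow> g1 y * (y - lower_barrier k y) = k * g y"
  using g1_pos[of y] by (simp add: lower_barrier_def)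

lemma lower_barrier_less: "0 < k \<Longrightarrow> 0 < y \<Longrightarrow> lower_barrier k y < y"
  using g_pos[of y] g1_pos[of y] by (simp add: lower_barrier_def)

lemma Jleft_deriv_eq_lower_barrier_iff:
  assumes "0 < k" "0 < y"
  shows "Jleft_deriv_eq g (lower_barrier k y) y 1 \<longleftrightarrow> g (lower_barrier k y) = (1 - k) * g y"
proof -
  have "Jleft_deriv_eq g (lower_barrier k y) y 1 \<longleftrightarrow> 1 = k * g y / (g y - g (lower_barrier k y))"
    using Jleft_deriv_eq_iff[OF g_deriv] deriv_mult_sub_lower_barrier assms(2) by simp
  also have "\<dots> \<longleftrightarrow> g (lower_barrier k y) = (1 - k) * g y"
    using g_pos[OF assms(2)] assms(1)
    by (cases "g y = g (lower_barrier k y)") (auto simp: field_simps)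
  finally show ?thesis .
qed

lemma barrier_solutionD:
  assumes k: "0 < k" "k \<le> 1" and sol: "barrier_solution g k lo hi"
  shows "lo < xs \<and> xs < hi \<and> (k = 1 \<longrightarrow> lo = 0) \<and> (k < 1 \<longrightarrow> 0 < lo)
           \<and> lo = lower_barrier k hi"
proof -
  have lo: "0 \<le> lo" "lo < hi" and g_lo: "g lo = (1 - k) * g hi"
    and secant: "g hi - g lo = g1 hi * (hi - lo)"
    using sol by (auto simp: barrier_solution_iff k)
  have "k = 1 \<longrightarrow> lo = 0"
    using g_lo g_pos[of lo] lo by force
  moreover have "k < 1 \<longrightarrow> 0 < lo"
    using g_lo g_pos[of hi] lo g_0 by (force simp: le_less)
  moreover have "g1 hi * (hi - lo) = k * g hi"
    using g_lo secant by (simp add: algebra_simps)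
  then have "lo = lower_barrier k hi"
    using g1_pos[of hi] lo by (simp add: lower_barrier_def field_simps)
  ultimately show ?thesis
    using secant_eq_deriv_straddles[OF lo secant] by blast
qed

lemma barrier_solution_lower_barrier:
  assumes "0 < k" "0 < y" "0 \<le> lower_barrier k y" "g (lower_barrier k y) = (1 - k) * g y"
  shows "barrier_solution g k (lower_barrier k y) y"
  using assms lower_barrier_less deriv_mult_sub_lower_barrier[of y k]
  by (simp add: barrier_solution_iff algebra_simps)

lemma lower_barrier_deriv:
  assumes "0 < y"
  shows "(lower_barrier k has_real_derivative 1 - k + k * g y * g2 y / (g1 y)\<^sup>2) (at y)"
proof -
  have "g1 y \<noteq> 0"
    using g1_pos assms by force
  then show ?thesis
    unfolding lower_barrier_def[abs_def] using g_deriv[OF assms] g1_deriv[OF assms]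
    by (auto intro!: derivative_eq_intros simp: field_simps power2_eq_square)
qed

lemma lower_barrier_continuous_on: "0 < a \<Longrightarrow> continuous_on {a..b} (lower_barrier k)"
  using lower_barrier_deriv
  by (intro continuous_at_imp_continuous_on) (meson DERIV_isCont atLeastAtMost_iff less_le_trans)

lemma lower_barrier_mono:
  assumes k: "0 < k" "k \<le> 1" and "xs \<le> a" "a \<le> b"
  shows "lower_barrier k a \<le> lower_barrier k b"
proof (rule DERIV_nonneg_imp_nondecreasing[OF \<open>a \<le> b\<close>])
  fix y assume "a \<le> y"
  then have "0 < y" "0 \<le> g2 y"
    using \<open>xs \<le> a\<close> xs_pos g2_pos[of y] g2_xs by (auto simp: le_less)
  then have "0 \<le> 1 - k + k * g y * g2 y / (g1 y)\<^sup>2"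
    using k g_pos[of y] by (intro add_nonneg_nonneg divide_nonneg_nonneg mult_nonneg_nonneg) auto
  then show "\<exists>d. (lower_barrier k has_real_derivative d) (at y) \<and> 0 \<le> d"
    using lower_barrier_deriv[OF \<open>0 < y\<close>] by blast
qed

lemma g_lower_barrier_gt_convex:
  assumes "0 < k" "0 < y" "xs \<le> lower_barrier k y"
  shows "(1 - k) * g y < g (lower_barrier k y)"
  using secant_lt_deriv_convex[of "lower_barrier k y" y] assms
    lower_barrier_less deriv_mult_sub_lower_barrier[of y k]
  by (simp add: algebra_simps)

lemma g_lower_barrier_lt_concave:
  assumes "0 < k" "0 < y" "y \<le> xs" "0 \<le> lower_barrier k y"
  shows "g (lower_barrier k y) < (1 - k) * g y"
  using secant_gt_deriv_concave[of "lower_barrier k y" y] assms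
    lower_barrier_less deriv_mult_sub_lower_barrier[of y k]
  by (simp add: algebra_simps)

lemma lower_barrier_reaches_xs:
  assumes k: "0 < k" "k \<le> 1" and unbounded: "\<And>B. \<exists>y\<ge>xs. B \<le> g1 y"
  obtains y where "xs \<le> y" "xs \<le> lower_barrier k y"
proof -
  define Y where "Y = xs + 1"
  obtain y where y: "xs \<le> y" "max (g Y) (g1 Y) + 1 \<le> g1 y"
    using unbounded by blast
  have "g1 Y < g1 y"
    using y by simp
  then have "Y < y"
    using g1_strict_increasing[of y Y] y(1) by (smt (verit))
  then have "g y - g Y < g1 y * (y - Y)"
    using secant_lt_deriv_convex[of Y y] unfolding Y_def by simp
  moreover have "k * g y \<le> g y"
    using k g_pos[of y] y xs_pos by simp
  ultimately have "k * g y \<le> g1 y * (y - xs)"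
    using y unfolding Y_def by (simp add: algebra_simps)
  then have "xs \<le> lower_barrier k y"
    using g1_pos[of y] y xs_pos by (simp add: lower_barrier_def field_simps)
  then show thesis
    using that y by blast
qed

lemma barrier_solution_exists:
  assumes k: "0 < k" "k \<le> 1" and unbounded: "\<And>B. \<exists>y\<ge>xs. B \<le> g1 y"
  shows "\<exists>lo hi. barrier_solution g k lo hi"
proof -
  define F where "F y = g (lower_barrier k y) - (1 - k) * g y" for y
  obtain b where b: "xs \<le> b" "xs \<le> lower_barrier k b"
    using lower_barrier_reaches_xs[OF k unbounded] by blast
  have "0 \<le> F b"
    using g_lower_barrier_gt_convex[OF k(1) _ b(2)] b xs_pos unfolding F_def by simp
  obtain a where a: "xs \<le> a" "a \<le> b" "0 \<le> lower_barrier k a" "F a \<le> 0"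
  proof (cases "0 \<le> lower_barrier k xs")
    case True
    then show thesis
      using that[of xs] g_lower_barrier_lt_concave[OF k(1) xs_pos] b unfolding F_def by simp
  next
    case False
    then obtain a where "xs \<le> a" "a \<le> b" "lower_barrier k a = 0"
      using IVT'[of "lower_barrier k" xs 0 b] b xs_pos lower_barrier_continuous_on[OF xs_pos]
      by auto
    then show thesis
      using that[of a] g_pos[of a] g_0 k xs_pos unfolding F_def by simp
  qed
  have lower_barrier_nonneg: "0 \<le> lower_barrier k y" if "a \<le> y" for y
    using lower_barrier_mono[OF k a(1) that] a(3) by simp
  have "continuous_on {a..b} F"
    unfolding F_def using a(1) xs_pos lower_barrier_nonneg
    by (intro continuous_intros continuous_on_compose2[OF g_cont]
        continuous_on_subset[OF g_cont] lower_barrier_continuous_on) auto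
  then obtain y where "a \<le> y" "F y = 0"
    using IVT'[of F a 0 b] a \<open>0 \<le> F b\<close> by auto
  then have "barrier_solution g k (lower_barrier k y) y"
    using barrier_solution_lower_barrier[OF k(1)] lower_barrier_nonneg a(1) xs_pos
    unfolding F_def by simp
  then show ?thesis
    by blast
qed

lemma barrier_solution_ex1:
  assumes k: "0 < k" "k \<le> 1" and unbounded: "\<And>B. \<exists>y\<ge>xs. B \<le> g1 y"
  shows "\<exists>!p. barrier_solution g k (fst p) (snd p)"
proof -
  obtain lo hi where "barrier_solution g k lo hi"
    using barrier_solution_exists[OF k unbounded] by blast
  then show ?thesis
    using barrier_solution_unique[OF k] by (intro ex1I[of _ "(lo, hi)"]) (auto simp: prod_eq_iff)
qed

end

theorem lemma4p4:
  fixes r k xs :: real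
    and mu sig mu' sig' g g1 g2 :: "real \<Rightarrow> real"
  assumes r_pos: "r > 0"
    and mu_deriv: "\<And>x. (mu has_real_derivative mu' x) (at x)"
    and sig_deriv: "\<And>x. (sig has_real_derivative sig' x) (at x)"
    and mu'_cont: "continuous_on UNIV mu'"
    and sig'_cont: "continuous_on UNIV sig'"
    and mu_lip: "\<exists>C. C-lipschitz_on UNIV mu"
    and sig_lip: "\<exists>C. C-lipschitz_on UNIV sig"
    and mu'_lip: "\<exists>C. C-lipschitz_on UNIV mu'"
    and sig'_lip: "\<exists>C. C-lipschitz_on UNIV sig'"
    and A2: "\<And>x. x \<ge> 0 \<Longrightarrow> (sig x)\<^sup>2 > 0"
    and A3: "\<And>x. x \<ge> 0 \<Longrightarrow> mu' x < r"
    and A4: "\<exists>\<epsilon>>0. \<exists>xa\<ge>0. \<forall>x\<ge>xa. mu' x < r - \<epsilon>"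
    and A5: "mu 0 > 0"
    and g_deriv: "\<And>x. x > 0 \<Longrightarrow> (g has_real_derivative g1 x) (at x)"
    and g1_deriv: "\<And>x. x > 0 \<Longrightarrow> (g1 has_real_derivative g2 x) (at x)"
    and g2_cont: "continuous_on {0<..} g2"
    and g_ode: "\<And>x. x > 0 \<Longrightarrow> mu x * g1 x + (sig x)\<^sup>2 / 2 * g2 x = r * g x"
    and g_0: "g 0 = 0"
    and g_deriv0: "(g has_real_derivative g1 0) (at 0 within {0..})"
    and g1_0: "g1 0 > 0"
    and xs_pos: "xs > 0"
    and xs_infl: "g2 xs = 0"
    and g2_neg: "\<And>x. 0 < x \<Longrightarrow> x < xs \<Longrightarrow> g2 x < 0"
    and g2_pos: "\<And>x. xs < x \<Longrightarrow> g2 x > 0"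
    and k_pos: "0 < k" and k_le: "k \<le> 1"
  shows "(\<exists>!p. 0 \<le> fst p \<and> fst p < snd p
                 \<and> Rfun g (fst p) (snd p) (snd p) = 1 / k
                 \<and> Jleft_deriv_eq g (fst p) (snd p) 1)
     \<and> (\<forall>lo hi. 0 \<le> lo \<and> lo < hi \<and> Rfun g lo hi hi = 1 / k \<and> Jleft_deriv_eq g lo hi 1 \<longrightarrow>
          lo < xs \<and> xs < hi
          \<and> (k = 1 \<longrightarrow> lo = 0) \<and> (k < 1 \<longrightarrow> lo > 0)
          \<and> Jleft_deriv_eq g (hi - k * g hi / g1 hi) hi 1
          \<and> lo = hi - k * g hi / g1 hi)
     \<and> (\<forall>y>0. Jleft_deriv_eq g (y - k * g y / g1 y) y 1
                 \<longleftrightarrow> g (y - k * g y / g1 y) = (1 - k) * g y)"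
proof -
  interpret concave_convex g g1 g2 xs
    using g_deriv g1_deriv g_0 xs_pos xs_infl g2_neg g2_pos DERIV_continuous[OF g_deriv0]
    by unfold_locales
  have sig_nonzero: "\<And>x. 0 < x \<Longrightarrow> sig x \<noteq> 0"
    using A2 by fastforce
  interpret increasing_concave_convex g g1 g2 xs
    using g1_pos_of_ode[OF r_pos g_ode sig_nonzero g_deriv0 g1_0] by unfold_locales
  obtain \<epsilon> xa where "0 < \<epsilon>" and mu'_le: "\<forall>x\<ge>xa. mu' x < r - \<epsilon>"
    using A4 by blast
  define \<rho> where "\<rho> = max (r - \<epsilon>) (r / 2)"
  have mu_le: "\<forall>\<^sub>F y in at_top. mu y \<le> \<rho> * y + (mu xa - \<rho> * xa)"
    using mu'_le by (intro eventually_le_linear_of_deriv_le[OF mu_deriv]) (auto simp: \<rho>_def)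
  obtain C where "C-lipschitz_on UNIV sig"
    using sig_lip by blast
  then have unbounded: "\<And>B. \<exists>y\<ge>xs. B \<le> g1 y"
    using g1_unbounded_of_ode[OF r_pos _ _ g_ode mu_le lipschitz_on_UNIV_eventually_abs_le]
      r_pos \<open>0 < \<epsilon>\<close> by (auto simp: \<rho>_def)
  show ?thesis
    using barrier_solution_ex1[OF k_pos k_le unbounded] barrier_solutionD[OF k_pos k_le]
      Jleft_deriv_eq_lower_barrier_iff[OF k_pos]
    unfolding barrier_solution_def lower_barrier_def by auto
qed

end
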